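(* Let $\mathtt C\subseteq\{0,1\}^{[n]}$ be a nonempty function class. Then $$\dim_{\mathrm{VC}}\mathtt C=\operatorname{reg}\big(T/\pi(I_{\mathtt C})\big),$$ where $\operatorname{reg}$ denotes Castelnuovo–Mumford regularity.
   Context: For $n\in\mathbb N$ let $[n]=\{0,\dots,n-1\}$. A function class is a set $\mathtt C$ of functions $[n]\to\{0,1\}$. The suboplex of $\mathtt C$ is the simplicial complex on vertex set $[n]\times\{0,1\}$ whose facets are the graphs $\{(i,f(i)):i\in[n]\}$ for $f\in\mathtt C$. Fix a field $\Bbbk$, let $S=\Bbbk[x_{(i,b)}: i\in[n], b\in\{0,1\}]$, and let $I_{\mathtt C}\subseteq S$ be the Stanley–Reisner ideal of the suboplex. Let $T=\Bbbk[y_i: i\in[n]]$ and let $\pi:S\to T$ be the surjective ring map with $x_{(i,b)}\mapsto y_i$; $\pi(I_{\mathtt C})$ is the image ideal. A set $U\subseteq[n]$ is shattered by $\mathtt C$ if every function $U\to\{0,1\}$ is a restriction of some $f\in\mathtt C$; the VC dimension $\dim_{\mathrm{VC}}\mathtt C$ is the maximum cardinality of a shattered set. *)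

theory Defs
  imports Main "HOL.Vector_Spaces" "HOL-Library.FuncSet" "HOL-Library.Function_Algebras"
begin

text \<open>A function class on [n] = {0..<n} is a set of extensional functions
  {0..<n} \<rightarrow> bool (bool plays the role of {0,1}).\<close>

definition function_class :: "nat \<Rightarrow> (nat \<Rightarrow> bool) set \<Rightarrow> bool" where
  "function_class n C \<longleftrightarrow> C \<subseteq> ({0..<n} \<rightarrow>\<^sub>E (UNIV :: bool set))"

definition shattered :: "(nat \<Rightarrow> bool) set \<Rightarrow> nat set \<Rightarrow> bool" where
  "shattered C U \<longleftrightarrow> (\<forall>g \<in> U \<rightarrow>\<^sub>E (UNIV :: bool set). \<exists>f\<in>C. \<forall>i\<in>U. f i = g i)"

definition vc_dim :: "nat \<Rightarrow> (nat \<Rightarrow> bool) set \<Rightarrow> nat" where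
  "vc_dim n C = Max {card U | U. U \<subseteq> {0..<n} \<and> shattered C U}"

definition suboplex_face :: "nat \<Rightarrow> (nat \<Rightarrow> bool) set \<Rightarrow> (nat \<times> bool) set \<Rightarrow> bool" where
  "suboplex_face n C \<sigma> \<longleftrightarrow> (\<exists>f\<in>C. \<sigma> \<subseteq> {(i, f i) | i. i < n})"

text \<open>Monomials of S = k[x_(i,b)] are exponent vectors a :: nat \<times> bool \<Rightarrow> nat
  supported on [n] \<times> {0,1}; monomials of T = k[y_i] are exponent vectors
  e :: nat \<Rightarrow> nat supported on [n].\<close>

definition monS :: "nat \<Rightarrow> (nat \<times> bool \<Rightarrow> nat) set" where
  "monS n = {a. \<forall>i b. n \<le> i \<longrightarrow> a (i, b) = 0}"

definition monT :: "nat \<Rightarrow> (nat \<Rightarrow> nat) set" where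
  "monT n = {e. \<forall>i. n \<le> i \<longrightarrow> e i = 0}"

text \<open>The Stanley--Reisner ideal I_C is the monomial ideal spanned by the monomials
  whose support is a non-face; we record its set of monomials.\<close>

definition SR_monomials :: "nat \<Rightarrow> (nat \<Rightarrow> bool) set \<Rightarrow> (nat \<times> bool \<Rightarrow> nat) set" where
  "SR_monomials n C = {a \<in> monS n. \<not> suboplex_face n C {v. a v \<noteq> 0}}"

text \<open>The ring map \<pi> : x_(i,b) \<mapsto> y_i on monomials.\<close>

definition pi_mon :: "(nat \<times> bool \<Rightarrow> nat) \<Rightarrow> (nat \<Rightarrow> nat)" where
  "pi_mon a = (\<lambda>i. a (i, False) + a (i, True))"

text \<open>\<pi>(I_C) is spanned by the images of the monomials of I_C, hence is the monomial
  ideal whose monomials are exactly these images.\<close>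

definition image_ideal_monomials :: "nat \<Rightarrow> (nat \<Rightarrow> bool) set \<Rightarrow> (nat \<Rightarrow> nat) set" where
  "image_ideal_monomials n C = pi_mon ` SR_monomials n C"

text \<open>M = T/J has k-basis the standard monomials (monomials of T not in J).
  Tor_i^T(M,k)_j is computed by the Koszul complex K(y_0,..,y_{n-1}; M), whose
  degree-j part in homological degree i has k-basis the pairs (m, F) with m standard,
  F \<subseteq> [n], |F| = i and deg m + |F| = j.  Chains are coefficient functions.\<close>

definition std_mons :: "nat \<Rightarrow> (nat \<Rightarrow> nat) set \<Rightarrow> (nat \<Rightarrow> nat) set" where
  "std_mons n J = monT n - J"

definition mdeg :: "nat \<Rightarrow> (nat \<Rightarrow> nat) \<Rightarrow> nat" where
  "mdeg n e = (\<Sum>i<n. e i)"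

definition koszul_basis :: "nat \<Rightarrow> (nat \<Rightarrow> nat) set \<Rightarrow> nat \<Rightarrow> nat \<Rightarrow> ((nat \<Rightarrow> nat) \<times> nat set) set" where
  "koszul_basis n J i j =
     {(e, F). e \<in> std_mons n J \<and> F \<subseteq> {0..<n} \<and> card F = i \<and> mdeg n e + i = j}"

definition koszul_chains :: "'k itself \<Rightarrow> nat \<Rightarrow> (nat \<Rightarrow> nat) set \<Rightarrow> nat \<Rightarrow> nat \<Rightarrow>
    (((nat \<Rightarrow> nat) \<times> nat set) \<Rightarrow> 'k::field) set" where
  "koszul_chains _ n J i j = {c. \<forall>x. c x \<noteq> 0 \<longrightarrow> x \<in> koszul_basis n J i j}"

text \<open>Koszul differential: m \<otimes> e_F \<mapsto> \<Sum>_{k\<in>F} (-1)^{#{l\<in>F. l<k}} (y_k m) \<otimes> e_{F-{k}},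
  where y_k m is zero in M when it lies in J.\<close>

definition koszul_d :: "nat \<Rightarrow> (nat \<Rightarrow> nat) set \<Rightarrow> (((nat \<Rightarrow> nat) \<times> nat set) \<Rightarrow> 'k::field)
    \<Rightarrow> (((nat \<Rightarrow> nat) \<times> nat set) \<Rightarrow> 'k)" where
  "koszul_d n J c = (\<lambda>(e, G).
     if e \<in> std_mons n J then
       (\<Sum>k \<in> {k. k < n \<and> k \<notin> G \<and> 0 < e k}.
          (- 1) ^ card {l \<in> G. l < k} * c (e(k := e k - 1), insert k G))
     else 0)"

definition kscale :: "'k::field \<Rightarrow> ('x \<Rightarrow> 'k) \<Rightarrow> ('x \<Rightarrow> 'k)" where
  "kscale a f = (\<lambda>x. a * f x)"

definition kdim :: "('x \<Rightarrow> 'k::field) set \<Rightarrow> nat" where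
  "kdim V = vector_space.dim kscale V"

text \<open>Graded Betti number \<beta>_{i,j}(T/J) = dim_k Tor_i^T(T/J, k)_j = dim_k H_i(K(y; T/J))_j.\<close>

definition betti :: "'k::field itself \<Rightarrow> nat \<Rightarrow> (nat \<Rightarrow> nat) set \<Rightarrow> nat \<Rightarrow> nat \<Rightarrow> nat" where
  "betti K n J i j =
     kdim {c \<in> koszul_chains K n J i j. koszul_d n J c = 0}
     - kdim (koszul_d n J ` koszul_chains K n J (Suc i) j)"

definition cm_reg :: "'k::field itself \<Rightarrow> nat \<Rightarrow> (nat \<Rightarrow> nat) set \<Rightarrow> int" where
  "cm_reg K n J = Max {int j - int i | i j. betti K n J i j \<noteq> 0}"

end

theory Submission
  imports Defs "HOL-Library.Indicator_Function"
begin

text \<open>Since \<pi> identifies x_(i,0) with x_(i,1), a monomial y^e lies outside \<pi>(I_C) exactly when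
  e is squarefree with shattered support: y_i^2 is the image of the non-face x_(i,0) x_(i,1),
  and the preimages of a squarefree y^e are the graphs of the functions on its support, which
  are all faces iff the support is shattered.  So T/\<pi>(I_C) is Artinian, its standard monomials
  are the shattered sets, and the regularity of an Artinian monomial quotient is the largest
  degree D of a standard monomial: a nonzero \<beta>_{i,j} needs a Koszul basis element m \<otimes> e_F
  with deg m = j - i, while m \<otimes> e_[n] for standard m of degree D is a Koszul cycle (every
  y_k m vanishes) and there are no boundaries in homological degree n, so \<beta>_{n,D+n} \<noteq> 0.\<close>

lemma not_squarefree_in_image_ideal:
  assumes "e \<in> monT n" "2 \<le> e i"
  shows "e \<in> image_ideal_monomials n C"
proof -
  have "i < n"
    using assms by (auto simp: monT_def not_le[symmetric])
  define a where "a = (\<lambda>(j, b). if j = i then (if b then e j - 1 else 1) else (if b then e j else 0))"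
  have "pi_mon a = e"
    using assms(2) by (auto simp: pi_mon_def a_def fun_eq_iff)
  moreover have "a \<in> monS n"
    using assms(1) \<open>i < n\<close> by (auto simp: monS_def monT_def a_def)
  moreover have "\<not> suboplex_face n C {v. a v \<noteq> 0}"
  proof
    assume "suboplex_face n C {v. a v \<noteq> 0}"
    then obtain f where sub: "{v. a v \<noteq> 0} \<subseteq> {(i, f i) | i. i < n}"
      by (auto simp: suboplex_face_def)
    have "(i, False) \<in> {v. a v \<noteq> 0}" "(i, True) \<in> {v. a v \<noteq> 0}"
      using assms(2) by (auto simp: a_def)
    with sub have "f i = False" "f i = True" by blast+
    then show False by simp
  qed
  ultimately show ?thesis
    unfolding image_ideal_monomials_def SR_monomials_def by blast
qed

lemma in_image_ideal_if_not_shattered: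
  assumes "e \<in> monT n" "\<forall>i. e i \<le> 1" "\<not> shattered C {i. e i \<noteq> 0}"
  shows "e \<in> image_ideal_monomials n C"
proof -
  let ?U = "{i. e i \<noteq> 0}"
  obtain g where missed: "\<forall>f\<in>C. \<exists>i\<in>?U. f i \<noteq> g i"
    using assms(3) by (auto simp: shattered_def)
  define a where "a = (\<lambda>(j, b). if j \<in> ?U \<and> b = g j then 1 else 0 :: nat)"
  have "pi_mon a = e"
  proof
    fix j
    show "pi_mon a j = e j"
      using assms(2)[rule_format, of j] by (cases "e j = 0") (auto simp: pi_mon_def a_def)
  qed
  moreover have "a \<in> monS n"
    using assms(1) by (auto simp: monS_def monT_def a_def)
  moreover have "\<not> suboplex_face n C {v. a v \<noteq> 0}"
  proof
    assume "suboplex_face n C {v. a v \<noteq> 0}"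
    then obtain f where "f \<in> C" and sub: "{v. a v \<noteq> 0} \<subseteq> {(i, f i) | i. i < n}"
      by (auto simp: suboplex_face_def)
    then obtain i where "i \<in> ?U" "f i \<noteq> g i"
      using missed by blast
    then have "(i, g i) \<in> {v. a v \<noteq> 0}"
      by (auto simp: a_def)
    with sub \<open>f i \<noteq> g i\<close> show False by blast
  qed
  ultimately show ?thesis
    unfolding image_ideal_monomials_def SR_monomials_def by blast
qed

lemma not_in_image_ideal_if_shattered:
  assumes "\<forall>i. e i \<le> 1" "shattered C {i. e i \<noteq> 0}"
  shows "e \<notin> image_ideal_monomials n C"
proof
  let ?U = "{i. e i \<noteq> 0}"
  assume "e \<in> image_ideal_monomials n C"
  then obtain a where a: "a \<in> monS n" and nonface: "\<not> suboplex_face n C {v. a v \<noteq> 0}"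
    and pa: "pi_mon a = e"
    unfolding image_ideal_monomials_def SR_monomials_def by blast
  define g where "g = (\<lambda>j. if j \<in> ?U then a (j, True) \<noteq> 0 else undefined)"
  have "g \<in> ?U \<rightarrow>\<^sub>E (UNIV :: bool set)"
    by (auto simp: g_def)
  then obtain f where "f \<in> C" and f: "\<forall>i\<in>?U. f i = g i"
    using assms(2) by (auto simp: shattered_def)
  have "(j, b) \<in> {(i, f i) | i. i < n}" if "a (j, b) \<noteq> 0" for j b
  proof -
    have sum_j: "a (j, False) + a (j, True) = e j"
      using pa by (simp add: pi_mon_def fun_eq_iff)
    have "j < n"
      using a that by (simp add: monS_def) (metis gr_implies_not0 not_le)
    have "e j \<noteq> 0"
      using sum_j that by (cases b) auto
    then have "e j = 1"
      using assms(1)[rule_format, of j] by arith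
    \<comment> \<open>only one of x_(j,0), x_(j,1) divides the monomial, and g records which\<close>
    then have "f j \<longleftrightarrow> a (j, True) \<noteq> 0"
      using f by (simp add: g_def)
    then have "b = f j"
      using sum_j that \<open>e j = 1\<close> by (cases b) auto
    then show ?thesis
      using \<open>j < n\<close> by blast
  qed
  then have "{v. a v \<noteq> 0} \<subseteq> {(i, f i) | i. i < n}"
    by auto
  then have "suboplex_face n C {v. a v \<noteq> 0}"
    using \<open>f \<in> C\<close> unfolding suboplex_face_def by blast
  with nonface show False ..
qed

lemma std_mons_image_ideal_iff:
  "e \<in> std_mons n (image_ideal_monomials n C) \<longleftrightarrow>
     e \<in> monT n \<and> (\<forall>i. e i \<le> 1) \<and> shattered C {i. e i \<noteq> 0}"
proof
  assume "e \<in> std_mons n (image_ideal_monomials n C)"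
  then have "e \<in> monT n" and notin: "e \<notin> image_ideal_monomials n C"
    by (auto simp: std_mons_def)
  moreover have "\<forall>i. e i \<le> 1"
    using not_squarefree_in_image_ideal[OF \<open>e \<in> monT n\<close>] notin by (metis Suc_1 not_less_eq_eq)
  ultimately show "e \<in> monT n \<and> (\<forall>i. e i \<le> 1) \<and> shattered C {i. e i \<noteq> 0}"
    using in_image_ideal_if_not_shattered by blast
next
  assume "e \<in> monT n \<and> (\<forall>i. e i \<le> 1) \<and> shattered C {i. e i \<noteq> 0}"
  then show "e \<in> std_mons n (image_ideal_monomials n C)"
    using not_in_image_ideal_if_shattered by (auto simp: std_mons_def)
qed

lemma support_subset_if_monT: "e \<in> monT n \<Longrightarrow> {i. e i \<noteq> 0} \<subseteq> {0..<n}"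
  by (auto simp: monT_def) (metis less_irrefl not_le)

lemma mdeg_squarefree:
  assumes "e \<in> monT n" "\<forall>i. e i \<le> 1"
  shows "mdeg n e = card {i. e i \<noteq> 0}"
proof -
  have squarefree: "e i = (if e i \<noteq> 0 then 1 else 0)" for i
    using assms(2)[rule_format, of i] by auto
  have "mdeg n e = (\<Sum>i<n. if e i \<noteq> 0 then 1 else 0)"
    unfolding mdeg_def by (rule sum.cong[OF refl squarefree])
  also have "\<dots> = card {i \<in> {..<n}. e i \<noteq> 0}"
    by (simp add: sum.inter_filter[symmetric])
  also have "{i \<in> {..<n}. e i \<noteq> 0} = {i. e i \<noteq> 0}"
    using support_subset_if_monT[OF assms(1)] by auto
  finally show ?thesis .
qed

lemma mdeg_decrement:
  assumes "k < n" "0 < e k"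
  shows "mdeg n e = Suc (mdeg n (e(k := e k - 1)))"
proof -
  have k: "k \<in> {..<n}" and fin: "finite {..<n}"
    using assms by auto
  have "mdeg n e = e k + (\<Sum>i\<in>{..<n} - {k}. e i)"
    unfolding mdeg_def by (rule sum.remove[OF fin k])
  moreover have "mdeg n (e(k := e k - 1)) = (e k - 1) + (\<Sum>i\<in>{..<n} - {k}. e i)"
    unfolding mdeg_def by (subst sum.remove[OF fin k]) (auto intro: sum.cong)
  ultimately show ?thesis
    using assms(2) by simp
qed

lemma finite_squarefree_monT: "finite {e \<in> monT n. \<forall>i. e i \<le> 1}"
proof (rule finite_surj)
  show "{e \<in> monT n. \<forall>i. e i \<le> 1} \<subseteq> (\<lambda>U i. if i \<in> U then 1 else 0) ` Pow {0..<n}"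
  proof
    fix e assume e: "e \<in> {e \<in> monT n. \<forall>i. e i \<le> 1}"
    then have "e = (\<lambda>i. if i \<in> {i. e i \<noteq> 0} then 1 else 0)"
      by (force simp: le_Suc_eq)
    then show "e \<in> (\<lambda>U i. if i \<in> U then 1 else 0) ` Pow {0..<n}"
      using support_subset_if_monT e by blast
  qed
qed simp

lemma finite_std_mons_image_ideal: "finite (std_mons n (image_ideal_monomials n C))"
  by (rule finite_subset[OF _ finite_squarefree_monT]) (auto simp: std_mons_image_ideal_iff)

lemma finite_shattered_cards: "finite {card U | U. U \<subseteq> {0..<n} \<and> shattered C U}"
proof (rule finite_subset)
  show "{card U | U. U \<subseteq> {0..<n} \<and> shattered C U} \<subseteq> {..n}"
    using card_mono[of "{0..<n}"] by fastforce
qed simp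

lemma card_le_vc_dim:
  assumes "U \<subseteq> {0..<n}" "shattered C U"
  shows "card U \<le> vc_dim n C"
  unfolding vc_dim_def using assms by (intro Max_ge[OF finite_shattered_cards]) blast

lemma vc_dim_attained:
  assumes "C \<noteq> {}"
  obtains U where "U \<subseteq> {0..<n}" "shattered C U" "card U = vc_dim n C"
proof -
  have "shattered C {}"
    using assms by (auto simp: shattered_def)
  then have "{card U | U. U \<subseteq> {0..<n} \<and> shattered C U} \<noteq> {}"
    by blast
  then have "vc_dim n C \<in> {card U | U. U \<subseteq> {0..<n} \<and> shattered C U}"
    unfolding vc_dim_def by (rule Max_in[OF finite_shattered_cards])
  then show ?thesis
    using that by auto
qed

lemma mdeg_std_mon_le_vc_dim:
  assumes "e \<in> std_mons n (image_ideal_monomials n C)"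
  shows "mdeg n e \<le> vc_dim n C"
  using assms card_le_vc_dim[OF support_subset_if_monT] mdeg_squarefree
  by (simp add: std_mons_image_ideal_iff)

lemma std_mon_of_degree_vc_dim:
  assumes "C \<noteq> {}"
  obtains e where "e \<in> std_mons n (image_ideal_monomials n C)" "mdeg n e = vc_dim n C"
proof -
  obtain U where U: "U \<subseteq> {0..<n}" "shattered C U" "card U = vc_dim n C"
    using vc_dim_attained[OF assms] .
  define e where "e = (\<lambda>i. if i \<in> U then 1 else 0 :: nat)"
  have e: "e \<in> monT n" "\<forall>i. e i \<le> 1" and supp: "{i. e i \<noteq> 0} = U"
    using U(1) by (auto simp: e_def monT_def)
  have "e \<in> std_mons n (image_ideal_monomials n C)"
    using e supp U(2) by (simp add: std_mons_image_ideal_iff)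
  moreover have "mdeg n e = vc_dim n C"
    using mdeg_squarefree[OF e] supp U(3) by simp
  ultimately show ?thesis
    using that by blast
qed

lemma vector_space_kscale: "vector_space (kscale :: 'k::field \<Rightarrow> ('x \<Rightarrow> 'k) \<Rightarrow> ('x \<Rightarrow> 'k))"
  by unfold_locales (auto simp: kscale_def fun_eq_iff algebra_simps)

lemma kdim_eq_0:
  fixes V :: "('x \<Rightarrow> 'k::field) set"
  assumes "V \<subseteq> {0}"
  shows "kdim V = 0"
proof -
  interpret vector_space "kscale :: 'k \<Rightarrow> ('x \<Rightarrow> 'k) \<Rightarrow> ('x \<Rightarrow> 'k)"
    by (rule vector_space_kscale)
  have "dim V \<le> card ({} :: ('x \<Rightarrow> 'k) set)"
    using assms by (intro dim_le_card) auto
  then show ?thesis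
    by (simp add: kdim_def)
qed

lemma in_span_point_masses:
  fixes c :: "'x \<Rightarrow> 'k::field"
  assumes "finite K" "\<forall>x. c x \<noteq> 0 \<longrightarrow> x \<in> K"
  shows "c \<in> module.span kscale ((\<lambda>x. indicator {x}) ` K)"
  using assms
proof (induction K arbitrary: c rule: finite_induct)
  interpret vector_space "kscale :: 'k \<Rightarrow> ('x \<Rightarrow> 'k) \<Rightarrow> ('x \<Rightarrow> 'k)"
    by (rule vector_space_kscale)
  case empty
  then have "c = 0"
    by (auto simp: fun_eq_iff)
  then show ?case
    by (simp add: span_zero zero_fun_def)
next
  interpret vector_space "kscale :: 'k \<Rightarrow> ('x \<Rightarrow> 'k) \<Rightarrow> ('x \<Rightarrow> 'k)"
    by (rule vector_space_kscale)
  case (insert x K)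
  let ?W = "(\<lambda>x. indicator {x}) ` insert x K"
  have "c(x := 0) \<in> span ((\<lambda>x. indicator {x}) ` K)"
    using insert by (intro insert.IH) auto
  then have "c(x := 0) \<in> span ?W"
    by (rule set_mp[OF span_mono, rotated]) auto
  moreover have "kscale (c x) (indicator {x}) \<in> span ?W"
    by (intro span_scale span_base) auto
  moreover have "c = c(x := 0) + kscale (c x) (indicator {x})"
    by (auto simp: fun_eq_iff kscale_def split: split_indicator)
  ultimately show ?case
    by (metis span_add)
qed

lemma kdim_pos:
  fixes V :: "('x \<Rightarrow> 'k::field) set"
  assumes "finite K" "\<forall>c\<in>V. \<forall>x. c x \<noteq> 0 \<longrightarrow> x \<in> K" "v \<in> V" "v \<noteq> 0"
  shows "0 < kdim V"
proof -
  interpret vector_space "kscale :: 'k \<Rightarrow> ('x \<Rightarrow> 'k) \<Rightarrow> ('x \<Rightarrow> 'k)"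
    by (rule vector_space_kscale)
  let ?W = "(\<lambda>x. indicator {x}) ` K :: ('x \<Rightarrow> 'k) set"
  obtain B where B: "B \<subseteq> V" "independent B" "V \<subseteq> span B" "card B = dim V"
    by (rule basis_exists)
  have "V \<subseteq> span ?W"
    using assms(1,2) in_span_point_masses by blast
  then have "finite B"
    using independent_span_bound[of ?W B] B assms(1) by auto
  moreover have "B \<noteq> {}"
    using B(3) assms(3,4) by auto
  ultimately show ?thesis
    using B(4)[symmetric] by (simp add: kdim_def card_gt_0_iff)
qed

lemma koszul_chains_subset_zero:
  "koszul_basis n J i j = {} \<Longrightarrow> koszul_chains K n J i j \<subseteq> {0}"
  by (auto simp: koszul_chains_def fun_eq_iff)

lemma finite_koszul_basis:
  "finite (std_mons n J) \<Longrightarrow> finite (koszul_basis n J i j)"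
  by (rule finite_subset[of _ "std_mons n J \<times> Pow {0..<n}"]) (auto simp: koszul_basis_def)

lemma betti_nonzero_imp_std_mon:
  assumes "betti K n J i j \<noteq> 0"
  obtains e where "e \<in> std_mons n J" "mdeg n e + i = j"
proof (rule ccontr)
  assume "\<not> thesis"
  with that have "koszul_basis n J i j = {}"
    by (auto simp: koszul_basis_def)
  then have "kdim {c \<in> koszul_chains K n J i j. koszul_d n J c = 0} = 0"
    by (intro kdim_eq_0) (use koszul_chains_subset_zero in blast)
  with assms show False
    by (simp add: betti_def)
qed

lemma koszul_d_point_mass:
  assumes "\<forall>e\<in>std_mons n J. mdeg n e \<noteq> Suc (mdeg n e0)"
  shows "koszul_d n J (indicator {(e0, G)} :: _ \<Rightarrow> 'k::field) = 0"
proof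
  fix x :: "(nat \<Rightarrow> nat) \<times> nat set"
  obtain e H where x: "x = (e, H)"
    by (cases x)
  have "(e(k := e k - 1), insert k H) \<noteq> (e0, G)"
    if "e \<in> std_mons n J" "k < n" "0 < e k" for k
    using assms that mdeg_decrement[of k n e] by auto
  then show "koszul_d n J (indicator {(e0, G)} :: _ \<Rightarrow> 'k) x = 0 x"
    unfolding x koszul_d_def by (auto intro: sum.neutral split: split_indicator)
qed

lemma betti_top_degree_nonzero:
  assumes "finite (std_mons n J)" "e0 \<in> std_mons n J" "\<forall>e\<in>std_mons n J. mdeg n e \<le> mdeg n e0"
  shows "betti TYPE('k::field) n J n (mdeg n e0 + n) \<noteq> 0"
proof -
  let ?j = "mdeg n e0 + n"
  let ?cycles = "{c \<in> koszul_chains TYPE('k) n J n ?j. koszul_d n J c = 0}"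
  let ?\<delta> = "indicator {(e0, {0..<n})} :: (nat \<Rightarrow> nat) \<times> nat set \<Rightarrow> 'k"
  have "?\<delta> \<in> koszul_chains TYPE('k) n J n ?j"
    using assms(2) by (auto simp: koszul_chains_def koszul_basis_def split: split_indicator)
  moreover have "koszul_d n J ?\<delta> = 0"
    using assms(3) by (intro koszul_d_point_mass) fastforce
  ultimately have "0 < kdim ?cycles"
    using finite_koszul_basis[OF assms(1)]
    by (intro kdim_pos[of "koszul_basis n J n ?j" _ ?\<delta>]) (auto simp: koszul_chains_def fun_eq_iff split: split_indicator)
  moreover have "koszul_basis n J (Suc n) ?j = {}"
    by (auto simp: koszul_basis_def dest!: card_mono[OF finite_atLeastLessThan])
  then have "koszul_d n J ` koszul_chains TYPE('k) n J (Suc n) ?j \<subseteq> {0}"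
    using koszul_chains_subset_zero by (fastforce simp: koszul_d_def fun_eq_iff)
  then have "kdim (koszul_d n J ` koszul_chains TYPE('k) n J (Suc n) ?j) = 0"
    by (rule kdim_eq_0)
  ultimately show ?thesis
    by (simp add: betti_def)
qed

lemma cm_reg_eq_max_std_degree:
  assumes "finite (std_mons n J)" "std_mons n J \<noteq> {}"
  shows "cm_reg TYPE('k::field) n J = int (Max (mdeg n ` std_mons n J))"
proof -
  let ?D = "Max (mdeg n ` std_mons n J)"
  let ?S = "{int j - int i | i j. betti TYPE('k) n J i j \<noteq> 0}"
  have "?D \<in> mdeg n ` std_mons n J"
    using assms by (intro Max_in) auto
  then obtain e0 where e0: "e0 \<in> std_mons n J" "mdeg n e0 = ?D"
    by force
  have S_bound: "?S \<subseteq> {0..int ?D}"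
  proof
    fix s assume "s \<in> ?S"
    then obtain i j where s: "s = int j - int i" and nonzero: "betti TYPE('k) n J i j \<noteq> 0"
      by blast
    obtain e where "e \<in> std_mons n J" "mdeg n e + i = j"
      by (rule betti_nonzero_imp_std_mon[OF nonzero])
    with s assms(1) show "s \<in> {0..int ?D}"
      by auto
  qed
  have "betti TYPE('k) n J n (?D + n) \<noteq> 0"
    using betti_top_degree_nonzero[OF assms(1) e0(1)] assms(1) e0(2) by simp
  then have "int ?D \<in> ?S"
    by force
  moreover have "finite ?S"
    using S_bound by (rule finite_subset) simp
  moreover have "s \<le> int ?D" if "s \<in> ?S" for s
    using subsetD[OF S_bound that] by simp
  ultimately show ?thesis
    unfolding cm_reg_def by (intro Max_eqI)
qed

theorem mainTheorem3:
  fixes n :: nat and C :: "(nat \<Rightarrow> bool) set"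
  assumes "function_class n C" and "C \<noteq> {}"
  shows "int (vc_dim n C) = cm_reg TYPE('k::field) n (image_ideal_monomials n C)"
proof -
  let ?std = "std_mons n (image_ideal_monomials n C)"
  obtain e where "e \<in> ?std" "mdeg n e = vc_dim n C"
    using std_mon_of_degree_vc_dim[OF assms(2)] .
  then have "Max (mdeg n ` ?std) = vc_dim n C"
    using finite_std_mons_image_ideal mdeg_std_mon_le_vc_dim
    by (intro Max_eqI) force+
  moreover have "cm_reg TYPE('k) n (image_ideal_monomials n C) = int (Max (mdeg n ` ?std))"
    using \<open>e \<in> ?std\<close> by (intro cm_reg_eq_max_std_degree finite_std_mons_image_ideal) blast
  ultimately show ?thesis
    by simp
qed

end
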